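(* Let $N\ge 2$, let $T_N$ be the homogeneous tree in which every vertex has degree $N$, and fix a root $o$. Let $m>1$ and assume either $(p,q)\in G_{5.1}=\{(p,q): p+q=m-1,\ p\ge0,\ q>0\}$, or $(p,q)\in G_{5.2}=\{(p,q): p+q=m-1,\ q<0\}$ with $1<m<3$. Then there exist $\lambda>0$ and a weight $\mu$ on $T_N$ such that $$W_o(n)\asymp e^{\lambda n}\quad\text{for } n\ge 2,$$ and the inequality $\Delta_m u+u^p|\nabla u|^q\le 0$ on $T_N$ admits a nontrivial positive solution.
   Context: A weight on a graph $(V,E)$ is a symmetric function $\mu:V\times V\to[0,\infty)$ with $\mu_{xy}=\mu_{yx}>0$ if and only if $x\sim y$ (adjacent); $\mu(x)=\sum_{y\sim x}\mu_{xy}$. For $m>1$, $\Delta_m u(x)=\frac{1}{\mu(x)}\sum_{y\sim x}\mu_{xy}|u(y)-u(x)|^{m-2}(u(y)-u(x))$ and $|\nabla u(x)|=\big(\sum_{y\sim x}\frac{\mu_{xy}}{2\mu(x)}(u(y)-u(x))^2\big)^{1/2}$. $d$ is the graph distance, $B(o,n)=\{x: d(o,x)\le n\}$, $W_o(n)=\sum_{x\in B(o,n),\,y\in V,\,d(o,x)<d(o,y)}\mu_{xy}$. $f(n)\asymp g(n)$ for $n\ge2$ means there are constants $c,C>0$ with $c\,g(n)\le f(n)\le C\,g(n)$ for all $n\ge 2$. A nontrivial positive solution is a non-constant $u:V\to(0,\infty)$ with $\Delta_m u(x)+u(x)^p|\nabla u(x)|^q\le0$ for all $x\in V$. *)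

theory Defs
  imports Complex_Main
begin

definition nbrs :: "'v set \<Rightarrow> ('v \<Rightarrow> 'v \<Rightarrow> bool) \<Rightarrow> 'v \<Rightarrow> 'v set" where
  "nbrs V adj x = {y \<in> V. adj x y}"

definition is_weight :: "'v set \<Rightarrow> ('v \<Rightarrow> 'v \<Rightarrow> bool) \<Rightarrow> ('v \<Rightarrow> 'v \<Rightarrow> real) \<Rightarrow> bool" where
  "is_weight V adj \<mu> \<longleftrightarrow>
     (\<forall>x\<in>V. \<forall>y\<in>V. \<mu> x y = \<mu> y x \<and> \<mu> x y \<ge> 0 \<and> (\<mu> x y > 0 \<longleftrightarrow> adj x y))"

definition vmeasure :: "'v set \<Rightarrow> ('v \<Rightarrow> 'v \<Rightarrow> bool) \<Rightarrow> ('v \<Rightarrow> 'v \<Rightarrow> real) \<Rightarrow> 'v \<Rightarrow> real" where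
  "vmeasure V adj \<mu> x = (\<Sum>y\<in>nbrs V adj x. \<mu> x y)"

text \<open>m-Laplacian; the factor |t|^(m-2) t is read as 0 when t = 0 (note 0 powr a = 0).\<close>
definition m_laplacian ::
  "'v set \<Rightarrow> ('v \<Rightarrow> 'v \<Rightarrow> bool) \<Rightarrow> ('v \<Rightarrow> 'v \<Rightarrow> real) \<Rightarrow> real \<Rightarrow> ('v \<Rightarrow> real) \<Rightarrow> 'v \<Rightarrow> real" where
  "m_laplacian V adj \<mu> m u x =
     (1 / vmeasure V adj \<mu> x) *
     (\<Sum>y\<in>nbrs V adj x. \<mu> x y * (\<bar>u y - u x\<bar> powr (m - 2) * (u y - u x)))"

definition grad_norm ::
  "'v set \<Rightarrow> ('v \<Rightarrow> 'v \<Rightarrow> bool) \<Rightarrow> ('v \<Rightarrow> 'v \<Rightarrow> real) \<Rightarrow> ('v \<Rightarrow> real) \<Rightarrow> 'v \<Rightarrow> real" where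
  "grad_norm V adj \<mu> u x =
     sqrt (\<Sum>y\<in>nbrs V adj x. \<mu> x y / (2 * vmeasure V adj \<mu> x) * (u y - u x)\<^sup>2)"

definition gdist :: "('v \<Rightarrow> 'v \<Rightarrow> bool) \<Rightarrow> 'v \<Rightarrow> 'v \<Rightarrow> nat" where
  "gdist adj x y = (LEAST n. (adj ^^ n) x y)"

definition W_fun ::
  "'v set \<Rightarrow> ('v \<Rightarrow> 'v \<Rightarrow> bool) \<Rightarrow> ('v \<Rightarrow> 'v \<Rightarrow> real) \<Rightarrow> 'v \<Rightarrow> nat \<Rightarrow> real" where
  "W_fun V adj \<mu> r n =
     (\<Sum>(x, y)\<in>{(x, y). x \<in> V \<and> y \<in> V \<and> adj x y \<and> gdist adj r x \<le> n
                        \<and> gdist adj r x < gdist adj r y}. \<mu> x y)"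

text \<open>Nontrivial positive solution of  \<Delta>_m u + u^p |\<nabla>u|^q \<le> 0.
  If q < 0, the term |\<nabla>u|^q is only finite when the gradient is nonzero,
  so this is required explicitly.\<close>
definition nontrivial_pos_solution ::
  "'v set \<Rightarrow> ('v \<Rightarrow> 'v \<Rightarrow> bool) \<Rightarrow> ('v \<Rightarrow> 'v \<Rightarrow> real) \<Rightarrow> real \<Rightarrow> real \<Rightarrow> real \<Rightarrow> ('v \<Rightarrow> real) \<Rightarrow> bool" where
  "nontrivial_pos_solution V adj \<mu> m p q u \<longleftrightarrow>
     (\<forall>x\<in>V. u x > 0) \<and> (\<exists>x\<in>V. \<exists>y\<in>V. u x \<noteq> u y) \<and>
     (\<forall>x\<in>V. (q < 0 \<longrightarrow> grad_norm V adj \<mu> u x > 0) \<and>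
        m_laplacian V adj \<mu> m u x + u x powr p * grad_norm V adj \<mu> u x powr q \<le> 0)"

text \<open>Vertices: words; the empty word, or words whose first letter is < N and
  whose further letters are < N - 1. Edges: x -- x @ [a]. Every vertex has degree N.\<close>
definition TN_verts :: "nat \<Rightarrow> nat list set" where
  "TN_verts N = {xs. xs = [] \<or> (hd xs < N \<and> (\<forall>a\<in>set (tl xs). a < N - 1))}"

definition TN_adj :: "nat \<Rightarrow> nat list \<Rightarrow> nat list \<Rightarrow> bool" where
  "TN_adj N x y \<longleftrightarrow> x \<in> TN_verts N \<and> y \<in> TN_verts N \<and>
     ((\<exists>a. y = x @ [a]) \<or> (\<exists>a. x = y @ [a]))"

end

theory Submission
  imports Defs
begin

text \<open>Let u(z) = A^(2k - |z|), where k is the length of the common prefix of the word z with the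
  ray [e], [e,0], [e,0,0], ... Then at every vertex u is multiplied by A towards exactly one
  neighbour and divided by A towards all the others. Give the edge above z the weight
  (1/\<rho>)^|z| on the ray, and let it grow by the factor \<rho>/(N-1) per generation off the ray. Then
  at every vertex the edges towards the smaller values of u together weigh \<kappa> times the
  remaining edge, with \<rho> \<le> \<kappa> \<le> 2\<rho>. As p + q = m - 1, the inequality at a vertex reduces to
  a condition on A and \<kappa> only, and A and \<rho> can be chosen so that it holds for all \<kappa> in
  [\<rho>, 2\<rho>]; for q < 0 this needs m < 3. Finally, the total weight of the edges between two
  levels of the tree grows at most by the factor \<rho>, and exactly by \<rho> below an off-ray
  vertex, so W_o(n) is comparable to \<rho>^n, i.e. \<lambda> = ln \<rho>.\<close>

definition child_letters :: "nat \<Rightarrow> nat list \<Rightarrow> nat set" where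
  "child_letters N y = {..<(if y = [] then N else N - 1)}"

lemma finite_child_letters [simp]: "finite (child_letters N y)"
  by (simp add: child_letters_def)

lemma card_child_letters: "card (child_letters N y) = (if y = [] then N else N - 1)"
  by (simp add: child_letters_def)

lemma snoc_in_TN_verts_iff:
  "y \<in> TN_verts N \<Longrightarrow> y @ [a] \<in> TN_verts N \<longleftrightarrow> a \<in> child_letters N y"
  by (cases y) (auto simp: TN_verts_def child_letters_def)

lemma butlast_in_TN_verts: "y \<in> TN_verts N \<Longrightarrow> butlast y \<in> TN_verts N"
  by (cases y) (auto simp: TN_verts_def dest: in_set_butlastD)

lemma set_TN_vert: "z \<in> TN_verts N \<Longrightarrow> set z \<subseteq> {..<N}"
  by (cases z) (auto simp: TN_verts_def)

lemma TN_adj_iff_butlast: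
  "TN_adj N x y \<longleftrightarrow> x \<in> TN_verts N \<and> y \<in> TN_verts N \<and>
     ((x \<noteq> [] \<and> y = butlast x) \<or> (y \<noteq> [] \<and> x = butlast y))"
  unfolding TN_adj_def by (metis butlast_snoc snoc_eq_iff_butlast)

lemma TN_adj_sym: "TN_adj N x y = TN_adj N y x"
  unfolding TN_adj_def by auto

lemma TN_adj_length: "TN_adj N x y \<Longrightarrow> length y = Suc (length x) \<or> length x = Suc (length y)"
  unfolding TN_adj_def by auto

lemma TN_adj_butlast: "z \<in> TN_verts N \<Longrightarrow> z \<noteq> [] \<Longrightarrow> TN_adj N (butlast z) z"
  unfolding TN_adj_iff_butlast using butlast_in_TN_verts by blast

lemma TN_nbrs_eq:
  assumes x: "x \<in> TN_verts N"
  shows "nbrs (TN_verts N) (TN_adj N) x =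
           (\<lambda>a. x @ [a]) ` child_letters N x \<union> (if x = [] then {} else {butlast x})"
proof (rule set_eqI)
  fix y
  have "y \<in> TN_verts N \<and> y \<noteq> [] \<and> x = butlast y \<longleftrightarrow> (\<exists>a\<in>child_letters N x. y = x @ [a])"
    using snoc_in_TN_verts_iff[OF x] by (metis butlast_snoc snoc_eq_iff_butlast)
  then show "y \<in> nbrs (TN_verts N) (TN_adj N) x \<longleftrightarrow>
               y \<in> (\<lambda>a. x @ [a]) ` child_letters N x \<union> (if x = [] then {} else {butlast x})"
    unfolding nbrs_def TN_adj_iff_butlast using x butlast_in_TN_verts[OF x] by auto
qed

lemma finite_TN_nbrs: "x \<in> TN_verts N \<Longrightarrow> finite (nbrs (TN_verts N) (TN_adj N) x)"
  by (simp add: TN_nbrs_eq)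

lemma TN_walk_length:
  "(TN_adj N ^^ n) x y \<Longrightarrow> length y \<le> length x + n \<and> length x \<le> length y + n"
proof (induction n arbitrary: y)
  case 0
  then show ?case by (auto elim: relpowp_0_E)
next
  case (Suc n)
  from Suc.prems obtain z where "(TN_adj N ^^ n) x z" "TN_adj N z y" by (rule relpowp_Suc_E)
  with Suc.IH[of z] TN_adj_length[of N z y] show ?case by auto
qed

lemma TN_walk_to_descendant: "r @ w \<in> TN_verts N \<Longrightarrow> (TN_adj N ^^ length w) r (r @ w)"
proof (induction w rule: rev_induct)
  case Nil
  then show ?case by simp
next
  case (snoc a w)
  have "TN_adj N (r @ w) (r @ w @ [a])"
    using TN_adj_butlast[OF snoc.prems] by (simp add: butlast_append)
  with snoc butlast_in_TN_verts[OF snoc.prems] show ?case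
    by (auto simp: butlast_append intro: relpowp_Suc_I)
qed

lemma TN_walk_to_root: "x \<in> TN_verts N \<Longrightarrow> (TN_adj N ^^ length x) x []"
proof (induction x rule: rev_induct)
  case Nil
  then show ?case by simp
next
  case (snoc a w)
  have "TN_adj N (w @ [a]) w"
    using TN_adj_butlast[OF snoc.prems] TN_adj_sym by (metis butlast_snoc snoc_eq_iff_butlast)
  with snoc butlast_in_TN_verts[OF snoc.prems] show ?case
    using relpowp_Suc_I2 by fastforce
qed

lemma TN_gdist_walk:
  assumes "x \<in> TN_verts N" and "y \<in> TN_verts N"
  shows "(TN_adj N ^^ gdist (TN_adj N) x y) x y"
proof -
  have "(TN_adj N ^^ (length x + length y)) x y"
    using relpowp_trans[OF TN_walk_to_root[OF assms(1)] TN_walk_to_descendant[of "[]" y N]] assms(2)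
    by simp
  then show ?thesis unfolding gdist_def by (rule LeastI)
qed

lemma TN_length_le_gdist:
  "x \<in> TN_verts N \<Longrightarrow> y \<in> TN_verts N \<Longrightarrow> length y \<le> length x + gdist (TN_adj N) x y"
  using TN_walk_length[OF TN_gdist_walk] by blast

lemma TN_gdist_descendant: "r @ w \<in> TN_verts N \<Longrightarrow> gdist (TN_adj N) r (r @ w) = length w"
  unfolding gdist_def
proof (rule Least_equality)
  show "(TN_adj N ^^ length w) r (r @ w)" if "r @ w \<in> TN_verts N"
    using that by (rule TN_walk_to_descendant)
qed (use TN_walk_length in fastforce)

section \<open>A ray, the weight and the solution\<close>

text \<open>The ray is [e], [e,0], [e,0,0], ...; \<open>ray_depth e z\<close> is the length of the longest common
  prefix of z with it, and \<open>ray_next e y\<close> is the letter continuing the ray after a vertex y on it.\<close>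

definition ray_depth :: "nat \<Rightarrow> nat list \<Rightarrow> nat" where
  "ray_depth e z =
     (if z = [] \<or> hd z \<noteq> e then 0 else Suc (length (takeWhile (\<lambda>c. c = 0) (tl z))))"

abbreviation on_ray :: "nat \<Rightarrow> nat list \<Rightarrow> bool" where
  "on_ray e y \<equiv> ray_depth e y = length y"

definition ray_next :: "nat \<Rightarrow> nat list \<Rightarrow> nat" where
  "ray_next e y = (if y = [] then e else 0)"

lemma ray_depth_Nil [simp]: "ray_depth e [] = 0"
  by (simp add: ray_depth_def)

lemma ray_depth_le_length: "ray_depth e z \<le> length z"
  using length_takeWhile_le[of "\<lambda>c. c = 0" "tl z"] by (cases z) (auto simp: ray_depth_def)

lemma ray_next_in_child_letters: "e < N \<Longrightarrow> N \<ge> 2 \<Longrightarrow> ray_next e y \<in> child_letters N y"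
  by (auto simp: ray_next_def child_letters_def)

lemma ray_depth_snoc:
  "ray_depth e (y @ [a]) =
     (if on_ray e y \<and> a = ray_next e y then Suc (ray_depth e y) else ray_depth e y)"
proof (cases "y = [] \<or> hd y \<noteq> e")
  case True
  then show ?thesis by (cases y) (auto simp: ray_depth_def ray_next_def)
next
  case False
  then obtain ys where y: "y = e # ys" by (cases y) auto
  show ?thesis
  proof (cases "\<forall>c\<in>set ys. c = 0")
    case True
    then have all_zero: "takeWhile (\<lambda>c. c = 0) ys = ys" and "\<not> (\<exists>c\<in>set ys. 0 < c)"
      by auto
    then show ?thesis by (simp add: y ray_depth_def ray_next_def takeWhile_append all_zero)
  next
    case False
    then have "takeWhile (\<lambda>c. c = 0) (ys @ [a]) = takeWhile (\<lambda>c. c = 0) ys"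
      by (auto intro: takeWhile_append1)
    moreover have "length (takeWhile (\<lambda>c. c = 0) ys) \<noteq> length ys"
      using False by (metis (full_types) set_takeWhileD takeWhile_eq_take take_all order_refl)
    ultimately show ?thesis by (simp add: y ray_depth_def)
  qed
qed

lemma ray_depth_append_off_ray: "ray_depth e y < length y \<Longrightarrow> ray_depth e (y @ w) = ray_depth e y"
proof (induction w rule: rev_induct)
  case (snoc a w)
  then show ?case using ray_depth_snoc[of e "y @ w" a] by (simp flip: append_assoc)
qed simp

text \<open>The weight of the edge from a vertex z to its parent: (1/\<rho>)^|z| on the ray; off the ray
  it is multiplied by \<rho>/(N-1) in every generation, so that the N-1 children of an off-ray
  vertex together carry \<rho> times its own weight.\<close>

definition edge_weight :: "nat \<Rightarrow> real \<Rightarrow> nat \<Rightarrow> nat list \<Rightarrow> real" where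
  "edge_weight N \<rho> e z =
     (if on_ray e z then (1/\<rho>) ^ length z
      else (1/\<rho>) ^ ray_depth e z * (\<rho> / real (N - 1)) ^ (length z - ray_depth e z - 1)
           / real (N - 1))"

lemma edge_weight_pos: "\<rho> > 0 \<Longrightarrow> N \<ge> 2 \<Longrightarrow> edge_weight N \<rho> e z > 0"
  unfolding edge_weight_def by auto

lemma edge_weight_on_ray: "on_ray e y \<Longrightarrow> edge_weight N \<rho> e y = (1/\<rho>) ^ length y"
  unfolding edge_weight_def by simp

lemma edge_weight_snoc_off_ray:
  assumes "ray_depth e y < length y"
  shows "edge_weight N \<rho> e (y @ [a]) = \<rho> / real (N - 1) * edge_weight N \<rho> e y"
proof -
  have "length (y @ [a]) - ray_depth e y - 1 = Suc (length y - ray_depth e y - 1)"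
    using assms by simp
  then show ?thesis
    using assms ray_depth_append_off_ray[OF assms, of "[a]"] by (simp add: edge_weight_def)
qed

lemma edge_weight_snoc_on_ray:
  "on_ray e y \<Longrightarrow> edge_weight N \<rho> e (y @ [a]) =
     (if a = ray_next e y then (1/\<rho>) ^ Suc (length y) else (1/\<rho>) ^ length y / real (N - 1))"
  unfolding edge_weight_def by (simp add: ray_depth_snoc)

lemma children_weight_off_ray:
  assumes "ray_depth e y < length y" and "N \<ge> 2"
  shows "(\<Sum>a\<in>child_letters N y. edge_weight N \<rho> e (y @ [a])) = \<rho> * edge_weight N \<rho> e y"
  using assms by (auto simp: edge_weight_snoc_off_ray[OF assms(1)] card_child_letters)

lemma children_weight_on_ray:
  assumes y: "on_ray e y" and N: "N \<ge> 2" and e: "e < N" and \<rho>: "\<rho> \<ge> 2"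
  shows "(\<Sum>a\<in>child_letters N y. edge_weight N \<rho> e (y @ [a])) \<le> \<rho> * edge_weight N \<rho> e y"
proof -
  let ?L = "child_letters N y" and ?w = "(1/\<rho>) ^ length y"
  have next_in: "ray_next e y \<in> ?L" by (rule ray_next_in_child_letters[OF e N])
  have "(\<Sum>a\<in>?L. edge_weight N \<rho> e (y @ [a]))
          = edge_weight N \<rho> e (y @ [ray_next e y])
            + (\<Sum>a\<in>?L - {ray_next e y}. edge_weight N \<rho> e (y @ [a]))"
    by (rule sum.remove[OF finite_child_letters next_in])
  also have "(\<Sum>a\<in>?L - {ray_next e y}. edge_weight N \<rho> e (y @ [a]))
               = real (card ?L - 1) * (?w / real (N - 1))"
    using edge_weight_snoc_on_ray[OF y] next_in by (simp add: card_Diff_singleton)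
  also have "\<dots> \<le> real (N - 1) * (?w / real (N - 1))"
    using \<rho> by (intro mult_right_mono) (auto simp: card_child_letters)
  also have "\<dots> = ?w" using N by simp
  also have "edge_weight N \<rho> e (y @ [ray_next e y]) = (1/\<rho>) * ?w"
    using edge_weight_snoc_on_ray[OF y] by simp
  finally have "(\<Sum>a\<in>?L. edge_weight N \<rho> e (y @ [a])) \<le> (1/\<rho> + 1) * ?w"
    by (simp add: algebra_simps)
  also have "\<dots> \<le> \<rho> * ?w"
  proof (rule mult_right_mono)
    have "1/\<rho> \<le> 1" using \<rho> by simp
    then show "1/\<rho> + 1 \<le> \<rho>" using \<rho> by linarith
  qed (use \<rho> in simp)
  finally show ?thesis using edge_weight_on_ray[OF y] by simp
qed

lemma children_weight_le:
  "N \<ge> 2 \<Longrightarrow> e < N \<Longrightarrow> \<rho> \<ge> 2 \<Longrightarrow>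
     (\<Sum>a\<in>child_letters N y. edge_weight N \<rho> e (y @ [a])) \<le> \<rho> * edge_weight N \<rho> e y"
  using children_weight_on_ray[of e y N \<rho>] children_weight_off_ray[of e y N \<rho>]
    ray_depth_le_length[of e y]
  by (cases "on_ray e y") auto

definition tree_weight :: "nat \<Rightarrow> real \<Rightarrow> nat \<Rightarrow> nat list \<Rightarrow> nat list \<Rightarrow> real" where
  "tree_weight N \<rho> e x y =
     (if TN_adj N x y then edge_weight N \<rho> e (if length x < length y then y else x) else 0)"

lemma is_weight_tree_weight:
  "N \<ge> 2 \<Longrightarrow> \<rho> > 0 \<Longrightarrow> is_weight (TN_verts N) (TN_adj N) (tree_weight N \<rho> e)"
  unfolding is_weight_def tree_weight_def
  using edge_weight_pos[of \<rho> N e] TN_adj_sym[of N] TN_adj_length[of N]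
  by (auto intro: less_imp_le) (metis n_not_Suc_n)+

lemma tree_weight_child:
  "x \<in> TN_verts N \<Longrightarrow> a \<in> child_letters N x \<Longrightarrow>
     tree_weight N \<rho> e x (x @ [a]) = edge_weight N \<rho> e (x @ [a])"
  unfolding tree_weight_def TN_adj_def using snoc_in_TN_verts_iff[of x N a] by auto

lemma tree_weight_parent:
  "x \<in> TN_verts N \<Longrightarrow> x \<noteq> [] \<Longrightarrow> tree_weight N \<rho> e x (butlast x) = edge_weight N \<rho> e x"
  unfolding tree_weight_def TN_adj_iff_butlast using butlast_in_TN_verts[of x N] by auto

text \<open>\<open>2 ray_depth z - |z|\<close> is the position along the ray minus the distance to the ray.\<close>

definition ray_solution :: "real \<Rightarrow> nat \<Rightarrow> nat list \<Rightarrow> real" where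
  "ray_solution A e z = A ^ (2 * ray_depth e z) / A ^ length z"

lemma ray_solution_pos: "A > 0 \<Longrightarrow> ray_solution A e z > 0"
  unfolding ray_solution_def by simp

lemma ray_solution_snoc:
  "A > 0 \<Longrightarrow> ray_solution A e (y @ [a]) =
     (if on_ray e y \<and> a = ray_next e y then A * ray_solution A e y else ray_solution A e y / A)"
  unfolding ray_solution_def by (simp add: ray_depth_snoc power_add field_simps)

section \<open>Exponential growth of W\<close>

definition level :: "nat \<Rightarrow> nat \<Rightarrow> nat list set" where
  "level N l = {z \<in> TN_verts N. length z = l}"

definition root_ball :: "nat \<Rightarrow> nat \<Rightarrow> nat list set" where
  "root_ball N l = {z \<in> TN_verts N. length z \<le> l}"

definition descendants :: "nat \<Rightarrow> nat list \<Rightarrow> nat \<Rightarrow> nat list set" where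
  "descendants N b k = {z \<in> TN_verts N. \<exists>w. z = b @ w \<and> length w = k}"

lemma finite_root_ball: "finite (root_ball N l)"
proof (rule finite_subset)
  show "root_ball N l \<subseteq> {xs. set xs \<subseteq> {..<N} \<and> length xs \<le> l}"
    using set_TN_vert by (auto simp: root_ball_def)
qed (simp add: finite_lists_length_le)

lemma finite_level: "finite (level N l)"
  by (rule finite_subset[OF _ finite_root_ball[of N l]]) (auto simp: level_def root_ball_def)

lemma finite_descendants: "finite (descendants N b k)"
  by (rule finite_subset[OF _ finite_root_ball[of N "length b + k"]])
     (auto simp: descendants_def root_ball_def)

lemma sum_over_children:
  "finite P \<Longrightarrow> (\<Sum>z\<in>(\<lambda>(y, a). y @ [a]) ` (SIGMA y:P. child_letters N y). f z) =
                 (\<Sum>y\<in>P. \<Sum>a\<in>child_letters N y. f (y @ [a]))"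
  by (subst sum.reindex) (auto simp: inj_on_def sum.Sigma split_def)

lemma children_of_eqI:
  assumes P: "P \<subseteq> TN_verts N"
    and Q: "\<And>z. z \<in> Q \<longleftrightarrow> z \<in> TN_verts N \<and> z \<noteq> [] \<and> butlast z \<in> P"
  shows "Q = (\<lambda>(y, a). y @ [a]) ` (SIGMA y:P. child_letters N y)"
proof (rule set_eqI)
  fix z
  show "z \<in> Q \<longleftrightarrow> z \<in> (\<lambda>(y, a). y @ [a]) ` (SIGMA y:P. child_letters N y)"
  proof
    assume "z \<in> Q"
    then have zV: "z \<in> TN_verts N" and z: "z = butlast z @ [last z]" and "butlast z \<in> P"
      using Q by auto
    moreover have "last z \<in> child_letters N (butlast z)"
      using snoc_in_TN_verts_iff[OF butlast_in_TN_verts[OF zV]] zV z by metis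
    ultimately show "z \<in> (\<lambda>(y, a). y @ [a]) ` (SIGMA y:P. child_letters N y)"
      by (intro image_eqI[of _ _ "(butlast z, last z)"]) auto
  next
    assume "z \<in> (\<lambda>(y, a). y @ [a]) ` (SIGMA y:P. child_letters N y)"
    then obtain y a where "y \<in> P" "a \<in> child_letters N y" "z = y @ [a]" by auto
    then show "z \<in> Q" using P Q snoc_in_TN_verts_iff by auto
  qed
qed

lemma level_Suc: "level N (Suc l) = (\<lambda>(y, a). y @ [a]) ` (SIGMA y:level N l. child_letters N y)"
  by (rule children_of_eqI) (auto simp: level_def butlast_in_TN_verts)

lemma descendants_Suc:
  assumes "b \<noteq> []"
  shows "descendants N b (Suc k) =
           (\<lambda>(y, a). y @ [a]) ` (SIGMA y:descendants N b k. child_letters N y)"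
proof (rule children_of_eqI)
  fix z
  have "(\<exists>w. z = b @ w \<and> length w = Suc k) \<longleftrightarrow> z \<noteq> [] \<and> (\<exists>w. butlast z = b @ w \<and> length w = k)"
  proof
    assume "\<exists>w. z = b @ w \<and> length w = Suc k"
    then obtain w where "z = b @ w" "length w = Suc k" by blast
    then show "z \<noteq> [] \<and> (\<exists>w. butlast z = b @ w \<and> length w = k)"
      by (auto simp: butlast_append intro!: exI[of _ "butlast w"])
  next
    assume "z \<noteq> [] \<and> (\<exists>w. butlast z = b @ w \<and> length w = k)"
    then obtain w where "z = (b @ w) @ [last z]" "length w = k" by (metis append_butlast_last_id)
    then show "\<exists>w. z = b @ w \<and> length w = Suc k" by (intro exI[of _ "w @ [last z]"]) auto
  qed
  then show "z \<in> descendants N b (Suc k) \<longleftrightarrow>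
               z \<in> TN_verts N \<and> z \<noteq> [] \<and> butlast z \<in> descendants N b k"
    unfolding descendants_def using butlast_in_TN_verts[of z N] by auto
qed (auto simp: descendants_def)

lemma level_weight_le:
  assumes "N \<ge> 2" and "e < N" and "\<rho> \<ge> 2"
  shows "(\<Sum>z\<in>level N l. edge_weight N \<rho> e z) \<le> \<rho> ^ l"
proof (induction l)
  case 0
  have "level N 0 = {[]}" by (auto simp: level_def TN_verts_def)
  then show ?case by (simp add: edge_weight_def)
next
  case (Suc l)
  have "(\<Sum>z\<in>level N (Suc l). edge_weight N \<rho> e z)
          = (\<Sum>y\<in>level N l. \<Sum>a\<in>child_letters N y. edge_weight N \<rho> e (y @ [a]))"
    unfolding level_Suc by (rule sum_over_children[OF finite_level])
  also have "\<dots> \<le> (\<Sum>y\<in>level N l. \<rho> * edge_weight N \<rho> e y)"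
    by (intro sum_mono children_weight_le assms)
  also have "\<dots> \<le> \<rho> * \<rho> ^ l"
    using Suc assms(3) by (simp add: sum_distrib_left[symmetric])
  finally show ?case by simp
qed

lemma root_ball_weight_le:
  assumes "N \<ge> 2" and "e < N" and "\<rho> \<ge> 2"
  shows "(\<Sum>z\<in>root_ball N l. edge_weight N \<rho> e z) \<le> 2 * \<rho> ^ l"
proof (induction l)
  case 0
  have "root_ball N 0 = {[]}" by (auto simp: root_ball_def TN_verts_def)
  then show ?case by (simp add: edge_weight_def)
next
  case (Suc l)
  have "root_ball N (Suc l) = root_ball N l \<union> level N (Suc l)"
    and "root_ball N l \<inter> level N (Suc l) = {}"
    by (auto simp: root_ball_def level_def)
  then have "(\<Sum>z\<in>root_ball N (Suc l). edge_weight N \<rho> e z)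
      = (\<Sum>z\<in>root_ball N l. edge_weight N \<rho> e z) + (\<Sum>z\<in>level N (Suc l). edge_weight N \<rho> e z)"
    by (simp add: sum.union_disjoint finite_root_ball finite_level)
  also have "\<dots> \<le> 2 * \<rho> ^ l + \<rho> ^ Suc l"
    using Suc level_weight_le[OF assms, of "Suc l"] by linarith
  also have "\<dots> \<le> 2 * \<rho> ^ Suc l"
    using assms(3) by (simp add: mult_right_mono)
  finally show ?case .
qed

lemma descendants_weight_off_ray:
  assumes "b \<in> TN_verts N" and off: "ray_depth e b < length b" and "N \<ge> 2"
  shows "(\<Sum>z\<in>descendants N b k. edge_weight N \<rho> e z) = \<rho> ^ k * edge_weight N \<rho> e b"
proof (induction k)
  case 0
  have "descendants N b 0 = {b}" using assms(1) by (auto simp: descendants_def)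
  then show ?case by simp
next
  case (Suc k)
  have "b \<noteq> []" using off by auto
  have "(\<Sum>z\<in>descendants N b (Suc k). edge_weight N \<rho> e z)
          = (\<Sum>y\<in>descendants N b k. \<Sum>a\<in>child_letters N y. edge_weight N \<rho> e (y @ [a]))"
    unfolding descendants_Suc[OF \<open>b \<noteq> []\<close>] by (rule sum_over_children[OF finite_descendants])
  also have "\<dots> = (\<Sum>y\<in>descendants N b k. \<rho> * edge_weight N \<rho> e y)"
  proof (intro sum.cong refl children_weight_off_ray assms(3))
    fix y assume "y \<in> descendants N b k"
    then obtain w where "y = b @ w" by (auto simp: descendants_def)
    then show "ray_depth e y < length y" using ray_depth_append_off_ray[OF off, of w] off by simp
  qed
  finally show ?case using Suc by (simp add: sum_distrib_left[symmetric])
qed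

definition W_edges :: "nat \<Rightarrow> nat list \<Rightarrow> nat \<Rightarrow> (nat list \<times> nat list) set" where
  "W_edges N r n = {(x, y). x \<in> TN_verts N \<and> y \<in> TN_verts N \<and> TN_adj N x y
      \<and> gdist (TN_adj N) r x \<le> n \<and> gdist (TN_adj N) r x < gdist (TN_adj N) r y}"

lemma W_fun_eq_sum_W_edges:
  "W_fun (TN_verts N) (TN_adj N) \<mu> r n = (\<Sum>(x, y)\<in>W_edges N r n. \<mu> x y)"
  unfolding W_fun_def W_edges_def by simp

lemma W_edges_subset:
  assumes r: "r \<in> TN_verts N"
  shows "W_edges N r n \<subseteq> root_ball N (length r + n + 1) \<times> root_ball N (length r + n + 1)"
proof (rule subrelI)
  fix x y assume "(x, y) \<in> W_edges N r n"
  then have xV: "x \<in> TN_verts N" and "y \<in> TN_verts N" and "TN_adj N x y"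
    and "gdist (TN_adj N) r x \<le> n" by (auto simp: W_edges_def)
  moreover have "length x \<le> length r + n" using TN_length_le_gdist[OF r xV] calculation by linarith
  ultimately show "(x, y) \<in> root_ball N (length r + n + 1) \<times> root_ball N (length r + n + 1)"
    using TN_adj_length by (fastforce simp: root_ball_def)
qed

lemma finite_W_edges: "r \<in> TN_verts N \<Longrightarrow> finite (W_edges N r n)"
  using W_edges_subset finite_root_ball by (metis finite_SigmaI finite_subset)

definition deeper_end :: "nat list \<times> nat list \<Rightarrow> nat list" where
  "deeper_end p = (if length (fst p) < length (snd p) then snd p else fst p)"

lemma tree_weight_deeper_end:
  "TN_adj N x y \<Longrightarrow> tree_weight N \<rho> e x y = edge_weight N \<rho> e (deeper_end (x, y))"
  by (simp add: tree_weight_def deeper_end_def)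

text \<open>An edge is determined by its deeper end up to orientation, and the orientation of the
  edges in \<open>W_edges\<close> is fixed by the distance to r.\<close>

lemma inj_on_deeper_end: "inj_on deeper_end (W_edges N r n)"
proof (rule inj_onI, clarify)
  fix x y x' y'
  assume "(x, y) \<in> W_edges N r n" "(x', y') \<in> W_edges N r n"
    and eq: "deeper_end (x, y) = deeper_end (x', y')"
  then have "TN_adj N x y" "TN_adj N x' y'"
    and "gdist (TN_adj N) r x < gdist (TN_adj N) r y"
    and "gdist (TN_adj N) r x' < gdist (TN_adj N) r y'"
    by (auto simp: W_edges_def)
  with eq show "x = x' \<and> y = y'"
    unfolding TN_adj_iff_butlast deeper_end_def by (auto split: if_splits)
qed

lemma W_fun_tree_weight_le:
  assumes "N \<ge> 2" and "e < N" and "\<rho> \<ge> 2" and r: "r \<in> TN_verts N"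
  shows "W_fun (TN_verts N) (TN_adj N) (tree_weight N \<rho> e) r n \<le> 2 * \<rho> ^ (length r + n + 1)"
proof -
  let ?E = "W_edges N r n" and ?B = "root_ball N (length r + n + 1)"
  have "W_fun (TN_verts N) (TN_adj N) (tree_weight N \<rho> e) r n
          = (\<Sum>p\<in>?E. edge_weight N \<rho> e (deeper_end p))"
    unfolding W_fun_eq_sum_W_edges
    by (rule sum.cong) (auto simp: W_edges_def tree_weight_deeper_end)
  also have "\<dots> = (\<Sum>z\<in>deeper_end ` ?E. edge_weight N \<rho> e z)"
    by (simp add: sum.reindex[OF inj_on_deeper_end])
  also have "\<dots> \<le> (\<Sum>z\<in>?B. edge_weight N \<rho> e z)"
  proof (rule sum_mono2[OF finite_root_ball])
    show "deeper_end ` ?E \<subseteq> ?B" using W_edges_subset[OF r, of n] by (force simp: deeper_end_def)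
  qed (use edge_weight_pos[of \<rho> N e] assms in \<open>auto intro: less_imp_le\<close>)
  also have "\<dots> \<le> 2 * \<rho> ^ (length r + n + 1)" by (rule root_ball_weight_le[OF assms(1-3)])
  finally show ?thesis .
qed

text \<open>The edges into the descendants of the off-ray child r @ [a] at distance n + 1 from r
  already carry \<rho>^n times the weight of its own edge.\<close>

lemma W_fun_tree_weight_ge:
  assumes "N \<ge> 2" and "\<rho> \<ge> 2" and r: "r \<in> TN_verts N" and b: "r @ [a] \<in> TN_verts N"
    and off: "ray_depth e (r @ [a]) < length (r @ [a])"
  shows "\<rho> ^ n * edge_weight N \<rho> e (r @ [a])
           \<le> W_fun (TN_verts N) (TN_adj N) (tree_weight N \<rho> e) r n"
proof -
  let ?D = "descendants N (r @ [a]) n"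
  let ?P = "(\<lambda>z. (butlast z, z)) ` ?D"
  have sub: "?P \<subseteq> W_edges N r n"
  proof clarify
    fix z assume "z \<in> ?D"
    then obtain w where zV: "z \<in> TN_verts N" and z: "z = r @ (a # w)" and "length w = n"
      by (auto simp: descendants_def)
    moreover have "butlast z = r @ butlast (a # w)" using z by (simp add: butlast_append)
    moreover have "butlast z \<in> TN_verts N" using butlast_in_TN_verts[OF zV] .
    ultimately show "(butlast z, z) \<in> W_edges N r n"
      using TN_gdist_descendant[of r _ N] TN_adj_butlast[OF zV] by (auto simp: W_edges_def)
  qed
  have "\<rho> ^ n * edge_weight N \<rho> e (r @ [a]) = (\<Sum>z\<in>?D. edge_weight N \<rho> e z)"
    using descendants_weight_off_ray[OF b off assms(1)] by simp
  also have "\<dots> = (\<Sum>z\<in>?D. tree_weight N \<rho> e (butlast z) z)"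
    by (intro sum.cong refl)
       (auto simp: descendants_def tree_weight_deeper_end TN_adj_butlast deeper_end_def)
  also have "\<dots> = (\<Sum>(x, y)\<in>?P. tree_weight N \<rho> e x y)"
    by (subst sum.reindex) (auto simp: inj_on_def)
  also have "\<dots> \<le> (\<Sum>(x, y)\<in>W_edges N r n. tree_weight N \<rho> e x y)"
    by (rule sum_mono2[OF finite_W_edges[OF r] sub])
       (use edge_weight_pos[of \<rho> N e] assms in \<open>auto simp: tree_weight_def less_imp_le\<close>)
  finally show ?thesis unfolding W_fun_eq_sum_W_edges .
qed

lemma exists_ray_avoiding: "N \<ge> 2 \<Longrightarrow> \<exists>e<N. ray_depth e (r @ [0]) < length (r @ [0])"
  by (rule exI[of _ "if r \<noteq> [] \<and> hd r = 1 then 0 else 1"]) (cases r; simp add: ray_depth_def)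

lemma W_fun_tree_weight_exponential:
  assumes N: "N \<ge> 2" and e: "e < N" and \<rho>: "\<rho> \<ge> 2" and r: "r \<in> TN_verts N"
    and off: "ray_depth e (r @ [0]) < length (r @ [0])"
  shows "\<exists>c>0. \<exists>C>0. \<forall>n. c * \<rho> ^ n \<le> W_fun (TN_verts N) (TN_adj N) (tree_weight N \<rho> e) r n
                       \<and> W_fun (TN_verts N) (TN_adj N) (tree_weight N \<rho> e) r n \<le> C * \<rho> ^ n"
proof (intro exI conjI allI)
  have "r @ [0] \<in> TN_verts N" using snoc_in_TN_verts_iff[OF r] N by (simp add: child_letters_def)
  then show "edge_weight N \<rho> e (r @ [0]) * \<rho> ^ n
               \<le> W_fun (TN_verts N) (TN_adj N) (tree_weight N \<rho> e) r n" for n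
    using W_fun_tree_weight_ge[OF N \<rho> r _ off] by (simp add: mult.commute)
  show "W_fun (TN_verts N) (TN_adj N) (tree_weight N \<rho> e) r n
          \<le> (2 * \<rho> ^ (length r + 1)) * \<rho> ^ n" for n
    using W_fun_tree_weight_le[OF N e \<rho> r, of n] by (simp add: power_add mult_ac)
qed (use edge_weight_pos N \<rho> in auto)

section \<open>The inequality at a vertex with one uphill neighbour\<close>

lemma powr_minus_2_mult_self: "t \<ge> 0 \<Longrightarrow> t powr (m - 2) * t = t powr (m - 1)"
  for t m :: real
  using powr_mult_base[of t "m - 2"] by (simp add: mult.commute)

text \<open>At a vertex where u is multiplied by A towards one neighbour and divided by A towards the
  others, whose edges weigh \<kappa> times the first one, both terms of the inequality are
  homogeneous of degree m - 1 in u when p + q = m - 1. Dividing by u(x)^(m-1) / (1 + \<kappa>)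
  leaves the following condition on A and \<kappa> alone.\<close>

definition star_grad :: "real \<Rightarrow> real \<Rightarrow> real" where
  "star_grad A \<kappa> = sqrt (((A - 1)\<^sup>2 + \<kappa> * (1 - 1/A)\<^sup>2) / (2 * (1 + \<kappa>)))"

definition star_ineq :: "real \<Rightarrow> real \<Rightarrow> real \<Rightarrow> real \<Rightarrow> bool" where
  "star_ineq m q A \<kappa> \<longleftrightarrow>
     (A - 1) powr (m - 1) + (1 + \<kappa>) * star_grad A \<kappa> powr q \<le> \<kappa> * (1 - 1/A) powr (m - 1)"

locale star_vertex =
  fixes V :: "'v set" and adj :: "'v \<Rightarrow> 'v \<Rightarrow> bool" and \<mu> :: "'v \<Rightarrow> 'v \<Rightarrow> real"
    and u :: "'v \<Rightarrow> real" and x U :: 'v and A \<kappa> :: real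
  assumes finite_nbrs: "finite (nbrs V adj x)" and uphill_nbr: "U \<in> nbrs V adj x"
    and u_pos: "u x > 0" and A_gt_1: "A > 1"
    and u_uphill: "u U = A * u x"
    and u_other: "\<And>y. y \<in> nbrs V adj x - {U} \<Longrightarrow> u y = u x / A"
    and weight_uphill_pos: "\<mu> x U > 0"
    and weight_other: "(\<Sum>y\<in>nbrs V adj x - {U}. \<mu> x y) = \<kappa> * \<mu> x U"
    and \<kappa>_nonneg: "\<kappa> \<ge> 0"
begin

lemma sum_nbrs_split:
  "(\<Sum>y\<in>nbrs V adj x. f y) = f U + (\<Sum>y\<in>nbrs V adj x - {U}. f y)"
  by (rule sum.remove[OF finite_nbrs uphill_nbr])

lemma sum_nbrs_star:
  assumes "\<And>y. y \<in> nbrs V adj x - {U} \<Longrightarrow> f y = \<mu> x y * g"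
  shows "(\<Sum>y\<in>nbrs V adj x. f y) = f U + \<kappa> * \<mu> x U * g"
  using assms by (simp add: sum_nbrs_split weight_other sum_distrib_right[symmetric])

lemma vmeasure_star: "vmeasure V adj \<mu> x = (1 + \<kappa>) * \<mu> x U"
  unfolding vmeasure_def using sum_nbrs_star[of "\<mu> x" 1] by (simp add: algebra_simps)

lemma differences_star:
  "u U - u x = (A - 1) * u x" "y \<in> nbrs V adj x - {U} \<Longrightarrow> u y - u x = - ((1 - 1/A) * u x)"
  using u_uphill u_other[of y] A_gt_1 by (simp_all add: field_simps)

lemma m_laplacian_star:
  "m_laplacian V adj \<mu> m u x =
     u x powr (m - 1) * ((A - 1) powr (m - 1) - \<kappa> * (1 - 1/A) powr (m - 1)) / (1 + \<kappa>)"
proof -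
  have "A - 1 > 0" "1 - 1/A > 0" using A_gt_1 by auto
  then have split_powr: "((A - 1) * u x) powr (m - 1) = (A - 1) powr (m - 1) * u x powr (m - 1)"
      "((1 - 1/A) * u x) powr (m - 1) = (1 - 1/A) powr (m - 1) * u x powr (m - 1)"
    using u_pos by (simp_all add: powr_mult)
  have "(\<Sum>y\<in>nbrs V adj x. \<mu> x y * (\<bar>u y - u x\<bar> powr (m - 2) * (u y - u x)))
      = \<mu> x U * ((A - 1) * u x) powr (m - 1) + \<kappa> * \<mu> x U * - (((1 - 1/A) * u x) powr (m - 1))"
    using u_pos \<open>A - 1 > 0\<close> \<open>1 - 1/A > 0\<close>
    by (subst sum_nbrs_star[where g = "- (((1 - 1/A) * u x) powr (m - 1))"])
       (simp_all add: differences_star powr_minus_2_mult_self)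
  also have "\<dots> = \<mu> x U * (u x powr (m - 1) * ((A - 1) powr (m - 1) - \<kappa> * (1 - 1/A) powr (m - 1)))"
    unfolding split_powr by (simp add: algebra_simps)
  finally show ?thesis
    using weight_uphill_pos \<kappa>_nonneg unfolding m_laplacian_def vmeasure_star by simp
qed

lemma grad_norm_star: "grad_norm V adj \<mu> u x = u x * star_grad A \<kappa>"
proof -
  have "(\<Sum>y\<in>nbrs V adj x. \<mu> x y / (2 * vmeasure V adj \<mu> x) * (u y - u x)\<^sup>2)
      = \<mu> x U / (2 * vmeasure V adj \<mu> x) * ((A - 1) * u x)\<^sup>2
        + \<kappa> * \<mu> x U * (((1 - 1/A) * u x)\<^sup>2 / (2 * vmeasure V adj \<mu> x))"
    by (subst sum_nbrs_star[where g = "((1 - 1/A) * u x)\<^sup>2 / (2 * vmeasure V adj \<mu> x)"])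
       (simp_all add: differences_star)
  also have "\<dots> = (u x)\<^sup>2 * ((A - 1)\<^sup>2 + \<kappa> * (1 - 1/A)\<^sup>2) * (\<mu> x U / (2 * vmeasure V adj \<mu> x))"
    by (simp only: power_mult_distrib) (simp add: algebra_simps)
  also have "\<mu> x U / (2 * vmeasure V adj \<mu> x) = 1 / (2 * (1 + \<kappa>))"
    using weight_uphill_pos by (simp add: vmeasure_star)
  finally have "(\<Sum>y\<in>nbrs V adj x. \<mu> x y / (2 * vmeasure V adj \<mu> x) * (u y - u x)\<^sup>2)
      = (u x)\<^sup>2 * (((A - 1)\<^sup>2 + \<kappa> * (1 - 1/A)\<^sup>2) / (2 * (1 + \<kappa>)))"
    by simp
  then show ?thesis
    using u_pos unfolding grad_norm_def star_grad_def
    by (simp only: real_sqrt_mult real_sqrt_abs abs_of_pos)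
qed

lemma grad_norm_star_pos: "grad_norm V adj \<mu> u x > 0"
proof -
  have "(A - 1)\<^sup>2 + \<kappa> * (1 - 1/A)\<^sup>2 > 0" using A_gt_1 \<kappa>_nonneg by (intro add_pos_nonneg) auto
  then show ?thesis using u_pos \<kappa>_nonneg by (simp add: grad_norm_star star_grad_def)
qed

lemma supersolution_star:
  assumes pq: "p + q = m - 1" and ineq: "star_ineq m q A \<kappa>"
  shows "m_laplacian V adj \<mu> m u x + u x powr p * grad_norm V adj \<mu> u x powr q \<le> 0"
proof -
  have "star_grad A \<kappa> > 0"
    using grad_norm_star_pos u_pos by (simp add: grad_norm_star zero_less_mult_iff)
  then have "u x powr p * grad_norm V adj \<mu> u x powr q = u x powr (m - 1) * star_grad A \<kappa> powr q"
    using u_pos pq by (simp add: grad_norm_star powr_mult flip: powr_add)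
  then have "m_laplacian V adj \<mu> m u x + u x powr p * grad_norm V adj \<mu> u x powr q
      = u x powr (m - 1) / (1 + \<kappa>) * ((A - 1) powr (m - 1) + (1 + \<kappa>) * star_grad A \<kappa> powr q
                                         - \<kappa> * (1 - 1/A) powr (m - 1))"
    using \<kappa>_nonneg by (simp add: m_laplacian_star field_simps)
  also have "\<dots> \<le> 0"
    using ineq \<kappa>_nonneg unfolding star_ineq_def by (intro mult_nonneg_nonpos) auto
  finally show ?thesis .
qed

end

lemma on_ray_snoc_iff: "on_ray e (y @ [a]) \<longleftrightarrow> on_ray e y \<and> a = ray_next e y"
  using ray_depth_le_length[of e y] by (simp add: ray_depth_snoc)

lemma ray_solution_snoc_ray_next:
  "A > 0 \<Longrightarrow> on_ray e y \<Longrightarrow> ray_solution A e (y @ [ray_next e y]) = A * ray_solution A e y"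
  by (simp add: ray_solution_snoc)

lemma ray_solution_snoc_off_ray:
  "A > 0 \<Longrightarrow> \<not> on_ray e (y @ [a]) \<Longrightarrow> ray_solution A e (y @ [a]) = ray_solution A e y / A"
  by (simp only: ray_solution_snoc on_ray_snoc_iff if_False)

definition uphill :: "nat \<Rightarrow> nat list \<Rightarrow> nat list" where
  "uphill e x = (if on_ray e x then x @ [ray_next e x] else butlast x)"

definition downhill_letters :: "nat \<Rightarrow> nat \<Rightarrow> nat list \<Rightarrow> nat set" where
  "downhill_letters N e x = child_letters N x - (if on_ray e x then {ray_next e x} else {})"

lemma finite_downhill_letters [simp]: "finite (downhill_letters N e x)"
  by (simp add: downhill_letters_def)

lemma off_ray_nonempty: "\<not> on_ray e x \<Longrightarrow> x \<noteq> []"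
  by auto

lemma TN_nbrs_minus_uphill:
  assumes x: "x \<in> TN_verts N" and N: "N \<ge> 2" and e: "e < N"
  shows "uphill e x \<in> nbrs (TN_verts N) (TN_adj N) x"
    and "nbrs (TN_verts N) (TN_adj N) x - {uphill e x} =
           (\<lambda>a. x @ [a]) ` downhill_letters N e x
           \<union> (if on_ray e x \<and> x \<noteq> [] then {butlast x} else {})"
  using ray_next_in_child_letters[OF e N, of x] off_ray_nonempty[of e x]
  by (auto simp: TN_nbrs_eq[OF x] uphill_def downhill_letters_def dest: arg_cong[of _ _ length])

lemma ray_solution_uphill:
  assumes "A > 0"
  shows "ray_solution A e (uphill e x) = A * ray_solution A e x"
proof (cases "on_ray e x")
  case True
  then show ?thesis using assms by (simp add: uphill_def ray_solution_snoc_ray_next)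
next
  case False
  then have "x = butlast x @ [last x]" using off_ray_nonempty by simp
  then show ?thesis
    using False assms ray_solution_snoc_off_ray[of A e "butlast x" "last x"]
    by (simp add: uphill_def)
qed

lemma ray_solution_downhill:
  assumes x: "x \<in> TN_verts N" and "N \<ge> 2" and "e < N" and "A > 0"
    and y: "y \<in> nbrs (TN_verts N) (TN_adj N) x - {uphill e x}"
  shows "ray_solution A e y = ray_solution A e x / A"
proof -
  consider a where "a \<in> downhill_letters N e x" "y = x @ [a]"
    | "on_ray e x" "x \<noteq> []" "y = butlast x"
    using y TN_nbrs_minus_uphill(2)[OF assms(1-3)] by (auto split: if_splits)
  then show ?thesis
  proof cases
    case 1
    then have "\<not> on_ray e (x @ [a])"
      unfolding on_ray_snoc_iff downhill_letters_def by (auto split: if_splits)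
    then show ?thesis using 1 \<open>A > 0\<close> by (simp add: ray_solution_snoc_off_ray)
  next
    case 2
    then have x: "x = y @ [last x]" by simp
    then have "on_ray e y" "last x = ray_next e y" using 2 on_ray_snoc_iff by metis+
    then have "ray_solution A e x = A * ray_solution A e y"
      using x \<open>A > 0\<close> ray_solution_snoc_ray_next by metis
    then show ?thesis using \<open>A > 0\<close> by simp
  qed
qed

lemma sum_downhill_nbrs:
  assumes "x \<in> TN_verts N" and "N \<ge> 2" and "e < N"
  shows "(\<Sum>y\<in>nbrs (TN_verts N) (TN_adj N) x - {uphill e x}. f y) =
           (\<Sum>a\<in>downhill_letters N e x. f (x @ [a]))
           + (if on_ray e x \<and> x \<noteq> [] then f (butlast x) else 0)"
proof -
  have "butlast x \<notin> (\<lambda>a. x @ [a]) ` downhill_letters N e x"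
    by (auto dest: arg_cong[of _ _ length])
  then show ?thesis
    unfolding TN_nbrs_minus_uphill(2)[OF assms]
    by (simp add: sum.union_disjoint sum.reindex inj_on_def)
qed

lemma tree_weight_uphill:
  assumes "x \<in> TN_verts N" and "N \<ge> 2" and "e < N"
  shows "tree_weight N \<rho> e x (uphill e x) =
           (if on_ray e x then (1/\<rho>) ^ Suc (length x) else edge_weight N \<rho> e x)"
  using assms ray_next_in_child_letters[OF assms(3,2)] off_ray_nonempty[of e x]
  by (simp add: uphill_def tree_weight_child tree_weight_parent edge_weight_snoc_on_ray)

lemma downhill_weight_off_ray:
  assumes "x \<in> TN_verts N" and "N \<ge> 2" and "e < N" and off: "\<not> on_ray e x"
  shows "(\<Sum>y\<in>nbrs (TN_verts N) (TN_adj N) x - {uphill e x}. tree_weight N \<rho> e x y)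
           = \<rho> * tree_weight N \<rho> e x (uphill e x)"
proof -
  have "ray_depth e x < length x" using off ray_depth_le_length[of e x] by linarith
  then show ?thesis
    using assms children_weight_off_ray[of e x N \<rho>]
    by (simp add: sum_downhill_nbrs tree_weight_uphill downhill_letters_def tree_weight_child)
qed

lemma downhill_weight_on_ray:
  assumes "x \<in> TN_verts N" and "N \<ge> 2" and "e < N" and on: "on_ray e x" and "\<rho> > 0"
  shows "(\<Sum>y\<in>nbrs (TN_verts N) (TN_adj N) x - {uphill e x}. tree_weight N \<rho> e x y)
           = \<rho> * (card (downhill_letters N e x) / real (N - 1) + (if x = [] then 0 else 1))
             * tree_weight N \<rho> e x (uphill e x)"
proof -
  have "(\<Sum>a\<in>downhill_letters N e x. tree_weight N \<rho> e x (x @ [a]))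
          = card (downhill_letters N e x) * ((1/\<rho>) ^ length x / real (N - 1))"
    using assms by (simp add: downhill_letters_def tree_weight_child edge_weight_snoc_on_ray)
  moreover have "x \<noteq> [] \<Longrightarrow> tree_weight N \<rho> e x (butlast x) = (1/\<rho>) ^ length x"
    using assms by (simp add: tree_weight_parent edge_weight_on_ray)
  ultimately show ?thesis
    using assms by (simp add: sum_downhill_nbrs tree_weight_uphill field_simps)
qed

lemma card_downhill_letters_on_ray:
  assumes "N \<ge> 2" and "e < N" and "on_ray e x"
  shows "card (downhill_letters N e x) = (if x = [] then N - 1 else N - 2)"
  using assms ray_next_in_child_letters[OF assms(2,1), of x]
  by (simp add: downhill_letters_def card_Diff_singleton card_child_letters numeral_2_eq_2)

lemma tree_star_vertex:
  assumes x: "x \<in> TN_verts N" and N: "N \<ge> 2" and e: "e < N" and \<rho>: "\<rho> \<ge> 2" and A: "A > 1"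
  obtains \<kappa> where "\<rho> \<le> \<kappa>" and "\<kappa> \<le> 2 * \<rho>" and
    "star_vertex (TN_verts N) (TN_adj N) (tree_weight N \<rho> e) (ray_solution A e) x (uphill e x) A \<kappa>"
proof -
  obtain \<kappa> where \<kappa>: "\<rho> \<le> \<kappa>" "\<kappa> \<le> 2 * \<rho>" and
    weights: "(\<Sum>y\<in>nbrs (TN_verts N) (TN_adj N) x - {uphill e x}. tree_weight N \<rho> e x y)
                = \<kappa> * tree_weight N \<rho> e x (uphill e x)"
  proof (cases "on_ray e x")
    case True
    define c where "c = card (downhill_letters N e x) / real (N - 1) + (if x = [] then 0 else 1)"
    have "1 \<le> c" "c \<le> 2"
      using N card_downhill_letters_on_ray[OF N e True] by (auto simp: c_def field_simps)
    then show thesis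
      using that[of "\<rho> * c"] \<rho> downhill_weight_on_ray[OF x N e True, of \<rho>] by (simp add: c_def)
  next
    case False
    then show thesis using that[of \<rho>] \<rho> downhill_weight_off_ray[OF x N e False] by simp
  qed
  have "star_vertex (TN_verts N) (TN_adj N) (tree_weight N \<rho> e) (ray_solution A e)
          x (uphill e x) A \<kappa>"
  proof
    show "tree_weight N \<rho> e x (uphill e x) > 0"
      using edge_weight_pos[of \<rho> N e] tree_weight_uphill[OF x N e, of \<rho>] \<rho> N by simp
  qed (use assms \<kappa> weights finite_TN_nbrs TN_nbrs_minus_uphill(1) ray_solution_pos
         ray_solution_uphill ray_solution_downhill in auto)
  then show thesis using that \<kappa> by blast
qed

lemma ray_solution_nontrivial_pos_solution:
  assumes N: "N \<ge> 2" and e: "e < N" and \<rho>: "\<rho> \<ge> 2" and A: "A > 1" and pq: "p + q = m - 1"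
    and ineq: "\<forall>\<kappa>\<in>{\<rho>..2 * \<rho>}. star_ineq m q A \<kappa>"
  shows "nontrivial_pos_solution (TN_verts N) (TN_adj N) (tree_weight N \<rho> e) m p q
           (ray_solution A e)"
  unfolding nontrivial_pos_solution_def
proof (intro conjI ballI impI)
  fix x assume x: "x \<in> TN_verts N"
  then obtain \<kappa> where "\<kappa> \<in> {\<rho>..2 * \<rho>}" and
    star: "star_vertex (TN_verts N) (TN_adj N) (tree_weight N \<rho> e) (ray_solution A e)
             x (uphill e x) A \<kappa>"
    using tree_star_vertex[OF x N e \<rho> A] by (metis atLeastAtMost_iff)
  then show "m_laplacian (TN_verts N) (TN_adj N) (tree_weight N \<rho> e) m (ray_solution A e) x
      + ray_solution A e x powr p
        * grad_norm (TN_verts N) (TN_adj N) (tree_weight N \<rho> e) (ray_solution A e) x powr q \<le> 0"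
    using star_vertex.supersolution_star[OF star pq] ineq by blast
  show "grad_norm (TN_verts N) (TN_adj N) (tree_weight N \<rho> e) (ray_solution A e) x > 0"
    by (rule star_vertex.grad_norm_star_pos[OF star])
  show "ray_solution A e x > 0" using A by (simp add: ray_solution_pos)
next
  have "ray_solution A e [] = 1" "ray_solution A e [e] = A"
    by (simp_all add: ray_solution_def ray_depth_def power2_eq_square)
  moreover have "[] \<in> TN_verts N" "[e] \<in> TN_verts N" using e by (simp_all add: TN_verts_def)
  ultimately show "\<exists>x\<in>TN_verts N. \<exists>y\<in>TN_verts N. ray_solution A e x \<noteq> ray_solution A e y"
    using A by (metis less_irrefl)
qed

section \<open>Choice of the parameters\<close>

lemma star_grad_nonneg: "\<kappa> \<ge> 0 \<Longrightarrow> star_grad A \<kappa> \<ge> 0"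
  unfolding star_grad_def by (intro real_sqrt_ge_zero divide_nonneg_nonneg) auto

lemma star_grad_le:
  assumes "A > 1" and "\<kappa> \<ge> 0" and "2 * (A - 1)\<^sup>2 \<le> \<kappa>"
  shows "star_grad A \<kappa> \<le> sqrt (3/4)"
proof -
  have "(1 - 1/A)\<^sup>2 \<le> 1" using assms(1) by (simp add: power_le_one)
  then have "\<kappa> * (1 - 1/A)\<^sup>2 \<le> \<kappa>" using assms(2) by (simp add: mult_left_le)
  then have "(A - 1)\<^sup>2 + \<kappa> * (1 - 1/A)\<^sup>2 \<le> 3/4 * (2 * (1 + \<kappa>))"
    using assms(2,3) by (simp add: algebra_simps)
  then show ?thesis unfolding star_grad_def using assms(2) by (simp add: divide_le_eq)
qed

lemma exists_powr_one_minus_inverse_gt: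
  fixes a c :: real
  assumes "c < 1"
  shows "\<exists>A>1. c < (1 - 1/A) powr a"
proof -
  have "((\<lambda>A::real. 1 - inverse A) \<longlongrightarrow> 1 - 0) at_top"
    by (intro tendsto_diff tendsto_const tendsto_inverse_0_at_top filterlim_ident)
  then have "((\<lambda>A. (1 - 1/A) powr a) \<longlongrightarrow> 1 powr a) at_top"
    by (intro tendsto_powr tendsto_const) (auto simp: inverse_eq_divide)
  then have "\<forall>\<^sub>F A in at_top. c < (1 - 1/A) powr a"
    using assms by (intro order_tendstoD(1)) auto
  then obtain A0 where "\<And>A. A \<ge> A0 \<Longrightarrow> c < (1 - 1/A) powr a"
    unfolding eventually_at_top_linorder by blast
  then show ?thesis by (intro exI[of _ "max A0 2"]) auto
qed

text \<open>For q > 0 the gradient term is bounded once \<rho> dominates (A - 1)^2, and A is taken so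
  large that (1 - 1/A)^(m-1) beats that bound; then the right-hand side grows faster in \<kappa>.\<close>

lemma exists_star_params_q_pos:
  assumes m: "m > 1" and q: "q > 0"
  shows "\<exists>A>1. \<exists>\<rho>\<ge>2. \<forall>\<kappa>\<in>{\<rho>..2 * \<rho>}. star_ineq m q A \<kappa>"
proof -
  define c where "c = sqrt (3/4) powr q"
  have "c \<ge> 0" and "c < 1"
    using powr_less_mono2[OF q, of "sqrt (3/4)" 1] by (auto simp: c_def)
  then obtain A where A: "A > 1" and s: "(1 + c) / 2 < (1 - 1/A) powr (m - 1)"
    using exists_powr_one_minus_inverse_gt[of "(1 + c) / 2" "m - 1"] by auto
  define T where "T = (A - 1) powr (m - 1)"
  define \<rho> where "\<rho> = max 2 (max (2 * (A - 1)\<^sup>2) (2 * (T + c) / (1 - c)))"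
  have "\<rho> \<ge> 2" by (simp add: \<rho>_def)
  moreover have "\<forall>\<kappa>\<in>{\<rho>..2 * \<rho>}. star_ineq m q A \<kappa>"
  proof
    fix \<kappa> assume "\<kappa> \<in> {\<rho>..2 * \<rho>}"
    then have \<kappa>: "\<rho> \<le> \<kappa>" "\<kappa> \<le> 2 * \<rho>" by auto
    have "\<kappa> \<ge> 0" and "2 * (A - 1)\<^sup>2 \<le> \<kappa>" using \<kappa> by (auto simp: \<rho>_def)
    then have "star_grad A \<kappa> powr q \<le> c"
      unfolding c_def using star_grad_le[OF A] q by (intro powr_mono2) (auto simp: star_grad_def)
    then have "T + (1 + \<kappa>) * star_grad A \<kappa> powr q \<le> T + c + \<kappa> * c"
      using \<open>\<kappa> \<ge> 0\<close> mult_left_mono[of _ c "1 + \<kappa>"] by (simp add: distrib_right)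
    also have "T + c \<le> (1 - c) / 2 * \<kappa>"
      using \<kappa> \<open>c < 1\<close> by (simp add: \<rho>_def field_simps)
    also have "(1 - c) / 2 * \<kappa> + \<kappa> * c \<le> \<kappa> * (1 - 1/A) powr (m - 1)"
      using s \<open>\<kappa> \<ge> 0\<close> mult_left_mono[of "(1 + c) / 2" "(1 - 1/A) powr (m - 1)" \<kappa>]
      by (simp add: field_simps)
    finally show "star_ineq m q A \<kappa>" unfolding star_ineq_def T_def by simp
  qed
  ultimately show ?thesis using A by blast
qed

lemma exists_square_ge_powr:
  fixes a C :: real
  assumes "a < 2" and "C > 0"
  shows "\<exists>T\<ge>1. C * T powr a \<le> T\<^sup>2"
proof -
  define T where "T = max 1 (C powr (1 / (2 - a)))"
  have "T \<ge> 1" by (simp add: T_def)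
  have "C = (C powr (1 / (2 - a))) powr (2 - a)"
    using assms by (simp add: powr_powr)
  also have "\<dots> \<le> T powr (2 - a)"
    using assms by (intro powr_mono2) (auto simp: T_def)
  finally have "C * T powr a \<le> T powr (2 - a) * T powr a"
    by (simp add: mult_right_mono)
  also have "\<dots> = T\<^sup>2"
    using \<open>T \<ge> 1\<close> by (simp flip: powr_add)
  finally show ?thesis using \<open>T \<ge> 1\<close> by blast
qed

lemma star_grad_powr_le_of_neg:
  assumes "q < 0" and "A > 1" and "\<kappa> \<ge> 1" and "K > 0" and "4 * \<kappa> * K \<le> (A - 1)\<^sup>2"
  shows "star_grad A \<kappa> powr q \<le> K powr (q/2)"
proof -
  have "K \<le> (A - 1)\<^sup>2 / (4 * \<kappa>)"
    using assms by (simp add: field_simps)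
  also have "\<dots> \<le> (A - 1)\<^sup>2 / (2 * (1 + \<kappa>))"
    using assms by (intro divide_left_mono) auto
  also have "\<dots> \<le> (star_grad A \<kappa>)\<^sup>2"
    using assms by (simp add: star_grad_def divide_right_mono)
  finally have "sqrt K \<le> star_grad A \<kappa>"
    using assms by (intro real_le_lsqrt star_grad_nonneg) auto
  then have "star_grad A \<kappa> powr q \<le> sqrt K powr q"
    using assms by (intro powr_mono2') auto
  also have "\<dots> = K powr (q/2)"
    using assms by (simp add: powr_half_sqrt[symmetric] powr_powr)
  finally show ?thesis .
qed

lemma quarter_le_one_minus_inverse_powr:
  fixes A m :: real
  assumes "A \<ge> 2" and "1 < m" and "m < 3"
  shows "1/4 \<le> (1 - 1/A) powr (m - 1)"
proof -
  have "(1/2::real) powr 2 \<le> (1/2) powr (m - 1)" using assms by (intro powr_mono') auto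
  also have "\<dots> \<le> (1 - 1/A) powr (m - 1)"
    using assms by (intro powr_mono2) (auto simp: field_simps)
  finally show ?thesis by (simp add: power2_eq_square)
qed

text \<open>For q < 0 the gradient term is bounded via a lower bound on the gradient, which needs
  (A - 1)^2 to dominate \<rho>; m < 3 makes this compatible with \<rho> dominating (A - 1)^(m-1).\<close>

lemma exists_star_params_q_neg:
  assumes m: "1 < m" "m < 3" and q: "q < 0"
  shows "\<exists>A>1. \<exists>\<rho>\<ge>2. \<forall>\<kappa>\<in>{\<rho>..2 * \<rho>}. star_ineq m q A \<kappa>"
proof -
  define K where "K = 16 powr (-2/q)"
  have "K \<ge> 1" unfolding K_def using q by (intro ge_one_powr_ge_zero) (auto simp: divide_nonpos_neg)
  have "-2/q * (q/2) = -1" using q by (simp add: field_simps)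
  then have Kq: "K powr (q/2) = 1/16"
    unfolding K_def powr_powr by (simp add: powr_minus_divide)
  obtain T where "T \<ge> 1" and T: "64 * K * T powr (m - 1) \<le> T\<^sup>2"
    using exists_square_ge_powr[of "m - 1" "64 * K"] m \<open>K \<ge> 1\<close> by auto
  have "1 \<le> T powr (m - 1)" using \<open>T \<ge> 1\<close> m by (simp add: ge_one_powr_ge_zero)
  define A where "A = T + 1"
  define \<rho> where "\<rho> = T\<^sup>2 / (8 * K)"
  have "8 * T powr (m - 1) \<le> \<rho>"
    using T \<open>K \<ge> 1\<close> by (simp add: \<rho>_def field_simps)
  with \<open>1 \<le> T powr (m - 1)\<close> have "\<rho> \<ge> 8" by linarith
  have "1/4 \<le> (1 - 1/A) powr (m - 1)"
    using quarter_le_one_minus_inverse_powr[of A m] \<open>T \<ge> 1\<close> m by (simp add: A_def)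
  have "\<forall>\<kappa>\<in>{\<rho>..2 * \<rho>}. star_ineq m q A \<kappa>"
  proof
    fix \<kappa> assume "\<kappa> \<in> {\<rho>..2 * \<rho>}"
    then have \<kappa>: "\<rho> \<le> \<kappa>" "\<kappa> \<le> 2 * \<rho>" by auto
    have "\<kappa> > 0" using \<kappa> \<open>\<rho> \<ge> 8\<close> by linarith
    then have "star_grad A \<kappa> powr q \<le> 1/16"
      using star_grad_powr_le_of_neg[OF q, of A \<kappa> K] \<kappa> \<open>\<rho> \<ge> 8\<close> \<open>K \<ge> 1\<close> \<open>T \<ge> 1\<close> Kq
      by (simp add: A_def \<rho>_def field_simps)
    then have "(1 + \<kappa>) * star_grad A \<kappa> powr q \<le> (1 + \<kappa>) / 16"
      using \<open>\<kappa> > 0\<close> mult_left_mono[of _ "1/16" "1 + \<kappa>"] by simp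
    moreover have "(A - 1) powr (m - 1) \<le> \<kappa> / 8"
      using \<kappa> \<open>8 * T powr (m - 1) \<le> \<rho>\<close> by (simp add: A_def)
    ultimately have "(A - 1) powr (m - 1) + (1 + \<kappa>) * star_grad A \<kappa> powr q
                       \<le> \<kappa> / 8 + (1 + \<kappa>) / 16"
      by linarith
    also have "\<dots> \<le> \<kappa> / 4" using \<kappa>(1) \<open>\<rho> \<ge> 8\<close> by (simp add: field_simps)
    also have "\<dots> \<le> \<kappa> * (1 - 1/A) powr (m - 1)"
      using \<open>\<kappa> > 0\<close> \<open>1/4 \<le> (1 - 1/A) powr (m - 1)\<close> mult_left_mono[of "1/4" _ \<kappa>] by simp
    finally show "star_ineq m q A \<kappa>" unfolding star_ineq_def .
  qed
  moreover have "A > 1" using \<open>T \<ge> 1\<close> by (simp add: A_def)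
  moreover have "\<rho> \<ge> 2" using \<open>\<rho> \<ge> 8\<close> by linarith
  ultimately show ?thesis by blast
qed

theorem mainTheorem12:
  fixes N :: nat and m p q :: real and r :: "nat list"
  assumes "N \<ge> 2" and "r \<in> TN_verts N" and "m > 1"
    and "(p + q = m - 1 \<and> p \<ge> 0 \<and> q > 0) \<or> (p + q = m - 1 \<and> q < 0 \<and> m < 3)"
  shows "\<exists>lam>0. \<exists>\<mu>. is_weight (TN_verts N) (TN_adj N) \<mu> \<and>
           (\<exists>c>0. \<exists>C>0. \<forall>n\<ge>2. c * exp (lam * real n) \<le> W_fun (TN_verts N) (TN_adj N) \<mu> r n
                              \<and> W_fun (TN_verts N) (TN_adj N) \<mu> r n \<le> C * exp (lam * real n)) \<and>
           (\<exists>u. nontrivial_pos_solution (TN_verts N) (TN_adj N) \<mu> m p q u)"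
proof -
  have pq: "p + q = m - 1" using assms(4) by blast
  obtain A \<rho> where A: "A > 1" and \<rho>: "\<rho> \<ge> 2" and ineq: "\<forall>\<kappa>\<in>{\<rho>..2 * \<rho>}. star_ineq m q A \<kappa>"
    using assms(3,4) exists_star_params_q_pos exists_star_params_q_neg by blast
  obtain e where e: "e < N" and off: "ray_depth e (r @ [0]) < length (r @ [0])"
    using exists_ray_avoiding[OF assms(1)] by blast
  have exp_ln_power: "exp (ln \<rho> * real n) = \<rho> ^ n" for n
    using \<rho> by (simp add: mult.commute[of "ln \<rho>"] exp_of_nat_mult)
  show ?thesis
  proof (rule exI[of _ "ln \<rho>"], intro conjI exI[of _ "tree_weight N \<rho> e"])
    show "ln \<rho> > 0" using \<rho> by simp
    show "is_weight (TN_verts N) (TN_adj N) (tree_weight N \<rho> e)"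
      using is_weight_tree_weight[OF assms(1)] \<rho> by simp
    show "\<exists>c>0. \<exists>C>0. \<forall>n\<ge>2.
            c * exp (ln \<rho> * real n) \<le> W_fun (TN_verts N) (TN_adj N) (tree_weight N \<rho> e) r n
            \<and> W_fun (TN_verts N) (TN_adj N) (tree_weight N \<rho> e) r n \<le> C * exp (ln \<rho> * real n)"
      using W_fun_tree_weight_exponential[OF assms(1) e \<rho> assms(2) off]
      unfolding exp_ln_power by blast
    show "\<exists>u. nontrivial_pos_solution (TN_verts N) (TN_adj N) (tree_weight N \<rho> e) m p q u"
      using ray_solution_nontrivial_pos_solution[OF assms(1) e \<rho> A pq ineq] by blast
  qed
qed

end
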